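(* For all complex $q$ with $|q|<1$, $$\sum_{n=0}^\infty \frac{q^{n^2+n}}{(-q;q)_n^2(1+q^{n+1})}=\frac{2}{(q;q)_\infty}\sum_{n=0}^\infty\frac{(-1)^n q^{\frac{3n(n+1)}{2}}(1-q^{2n+1})}{(1+q^n)(1+q^{n+1})}=\frac{2}{(q;q)_\infty}\sum_{n\in\mathbb Z}\frac{(-1)^n q^{\frac{3n(n+1)}{2}}}{1+q^n}.$$
   Context: For $n\in\mathbb N_0\cup\{\infty\}$, $(a;q)_n:=\prod_{j=0}^{n-1}(1-aq^j)$. *)

theory Defs
  imports "HOL-Analysis.Analysis"
begin

definition qpoch :: "complex \<Rightarrow> complex \<Rightarrow> nat \<Rightarrow> complex" where
  "qpoch a q n = (\<Prod>j<n. 1 - a * q ^ j)"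

definition qpoch_inf :: "complex \<Rightarrow> complex \<Rightarrow> complex" where
  "qpoch_inf a q = (\<Prod>j. 1 - a * q ^ j)"

end

theory Submission
  imports Defs
begin

text \<open>Evaluating the partial fraction expansion of \<open>z^(n+1) / (z;q)_(2n+2)\<close> at
  \<open>z = -q^(-n-1)\<close> and pairing the poles \<open>j = n + 1 + k\<close> and \<open>j = n - k\<close> gives
  \<open>q^(n(n+1)) / ((-q;q)_n (-q;q)_(n+1)) = 2 \<Sum>_(k\<le>n) a_k q^(n(n+1)) / ((q;q)_(n-k) (q;q)_(n+k+1))\<close>
  with \<open>a_k = (-1)^k q^(k(k+1)/2) (1 - q^(2k+1)) / ((1 + q^k) (1 + q^(k+1)))\<close>.
  Summing over \<open>n\<close> and exchanging the order of summation, the sum over \<open>n \<ge> k\<close> is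
  \<open>a_k q^(k(k+1))\<close> times the Durfee rectangle sum
  \<open>\<Sum>_s q^(s(s+b)) / ((q;q)_s (q;q)_(s+b)) = 1 / (q;q)_\<infinity>\<close> with \<open>b = 2k + 1\<close>.
  Pairing \<open>n\<close> with \<open>-n - 1\<close> turns the bilateral sum into the one-sided one.\<close>

lemma qpoch_0 [simp]: "qpoch a q 0 = 1"
  by (simp add: qpoch_def)

lemma qpoch_Suc: "qpoch a q (Suc n) = qpoch a q n * (1 - a * q ^ n)"
  by (simp add: qpoch_def)

lemma qpoch_Suc_shift: "qpoch a q (Suc n) = (1 - a) * qpoch (a * q) q n"
  unfolding qpoch_def by (subst prod.lessThan_Suc_shift) (simp add: mult.assoc)

lemma qpoch_qq_Suc: "qpoch q q (Suc n) = qpoch q q n * (1 - q ^ Suc n)"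
  by (simp add: qpoch_Suc)

lemma qpoch_nonzero:
  assumes "norm q \<le> 1" "norm a < 1"
  shows "qpoch a q n \<noteq> 0"
proof -
  have "norm (a * q ^ j) \<le> norm a" for j
    using assms(1) by (simp add: norm_mult norm_power mult_left_le power_le_one)
  then have "a * q ^ j \<noteq> 1" for j
    using assms(2) by (metis norm_one not_le)
  then show ?thesis
    unfolding qpoch_def by simp
qed

definition tri :: "nat \<Rightarrow> nat" where
  "tri k = k * (k + 1) div 2"

lemma tri_0 [simp]: "tri 0 = 0"
  by (simp add: tri_def)

lemma tri_Suc: "tri (Suc k) = tri k + Suc k"
proof -
  have "Suc k * (Suc k + 1) = k * (k + 1) + 2 * Suc k"
    by (simp add: algebra_simps)
  then show ?thesis
    unfolding tri_def by simp
qed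

lemma double_tri: "2 * tri k = k * (k + 1)"
  unfolding tri_def by simp

lemma prod_power_Suc_eq_power_tri: "(\<Prod>k<m. (q :: 'a::comm_monoid_mult) ^ Suc k) = q ^ tri m"
  by (induction m) (simp_all add: tri_Suc power_add mult_ac)

lemma tri_add_Suc: "tri (n + 1 + k) + tri n = tri k + (n + 1 + k) * (n + 1)"
proof -
  have "2 * (tri (n + 1 + k) + tri n) = 2 * (tri k + (n + 1 + k) * (n + 1))"
    unfolding add_mult_distrib2 double_tri by (simp add: algebra_simps)
  then show ?thesis
    by simp
qed

lemma tri_diff:
  assumes "k \<le> n"
  shows "tri (n - k) + tri n = tri k + (n - k) * (n + 1)"
proof -
  obtain m where m: "n = k + m"
    using assms le_Suc_ex by blast
  have "2 * (tri m + tri (k + m)) = 2 * (tri k + m * (k + m + 1))"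
    unfolding add_mult_distrib2 double_tri by (simp add: algebra_simps)
  then show ?thesis
    using m by simp
qed

lemma square_eq_tri_add_tri: "(n + 1) * (n + 1) = tri (n + 1) + tri n"
proof -
  have "2 * ((n + 1) * (n + 1)) = 2 * (tri (n + 1) + tri n)"
    unfolding add_mult_distrib2 double_tri by (simp add: algebra_simps)
  then show ?thesis
    by simp
qed

lemma three_tri: "3 * k * (k + 1) div 2 = tri k + k * (k + 1)"
proof -
  have "3 * k * (k + 1) = 2 * (k * (k + 1)) + k * (k + 1)"
    by (simp add: algebra_simps)
  then show ?thesis
    unfolding tri_def by simp
qed

lemma three_tri_ge: "(k :: nat) \<le> 3 * k * (k + 1) div 2"
  using three_tri[of k] by simp

lemma sum_atMost_Suc_pascal:
  fixes a b :: "nat \<Rightarrow> 'a::field"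
  shows "(\<Sum>j\<le>Suc N. ((if j \<le> N then a j else 0) - (if j = 0 then 0 else b (j - 1))) / w j)
    = (\<Sum>j\<le>N. a j / w j) - (\<Sum>j\<le>N. b j / w (Suc j))"
proof -
  have "(\<Sum>j\<le>Suc N. (if j \<le> N then a j else 0) / w j) = (\<Sum>j\<le>N. a j / w j)"
    by simp
  moreover have "(\<Sum>j\<le>Suc N. (if j = 0 then 0 else b (j - 1)) / w j) = (\<Sum>j\<le>N. b j / w (Suc j))"
    by (simp only: sum.atMost_Suc_shift) simp
  ultimately show ?thesis
    by (simp add: diff_divide_distrib sum_subtractf)
qed

text \<open>\<open>qpf_coeff q N j\<close> is the coefficient of \<open>1 / (1 - z q^j)\<close> in the partial fraction expansion
  of \<open>1 / (z;q)_(N+1)\<close>; it equals \<open>(-1)^j q^(j(j+1)/2) [N, j]_q / (q;q)_N\<close>.\<close>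
definition qpf_coeff :: "complex \<Rightarrow> nat \<Rightarrow> nat \<Rightarrow> complex" where
  "qpf_coeff q N j = (-1) ^ j * q ^ tri j / (qpoch q q j * qpoch q q (N - j))"

definition qpf_term :: "complex \<Rightarrow> nat \<Rightarrow> nat \<Rightarrow> complex \<Rightarrow> nat \<Rightarrow> complex" where
  "qpf_term q N d z j = qpf_coeff q N j / (q ^ (j * d) * (1 - z * q ^ j))"

context
  fixes q :: complex
  assumes qpoch_nz: "\<And>n. qpoch q q n \<noteq> 0"
begin

lemma one_minus_power_Suc_nonzero: "1 - q ^ Suc n \<noteq> 0"
  using qpoch_nz[of "Suc n"] by (simp add: qpoch_qq_Suc)

lemma qpf_coeff_Suc_right:
  assumes "i < N"
  shows "(1 - q ^ Suc i) * qpf_coeff q N (Suc i) = - (q ^ Suc i * (1 - q ^ (N - i)) * qpf_coeff q N i)"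
proof -
  define A B s T x y where "A = qpoch q q i" and "B = qpoch q q (N - Suc i)"
    and "s = (-1 :: complex) ^ i" and "T = q ^ tri i" and "x = q ^ Suc i" and "y = q ^ (N - i)"
  have Ni: "N - i = Suc (N - Suc i)"
    using assms by simp
  have nz: "A \<noteq> 0" "B \<noteq> 0" "1 - x \<noteq> 0" "1 - y \<noteq> 0"
    using qpoch_nz one_minus_power_Suc_nonzero by (auto simp: A_def B_def x_def y_def Ni)
  have c1: "qpf_coeff q N (Suc i) = - (s * T * x / (A * (1 - x) * B))"
    by (simp add: qpf_coeff_def A_def B_def s_def T_def x_def qpoch_qq_Suc tri_Suc power_add)
  have c0: "qpf_coeff q N i = s * T / (A * (B * (1 - y)))"
    unfolding qpf_coeff_def Ni qpoch_qq_Suc by (simp add: A_def B_def s_def T_def y_def Ni)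
  show ?thesis
    unfolding c0 c1 x_def[symmetric] y_def[symmetric] using nz by (simp add: field_simps)
qed

lemma qpf_coeff_Suc_left:
  assumes "j \<le> N"
  shows "(1 - q ^ (Suc N - j)) * qpf_coeff q (Suc N) j = qpf_coeff q N j"
proof -
  have "qpoch q q (Suc N - j) = qpoch q q (N - j) * (1 - q ^ (Suc N - j))"
    using assms by (simp add: Suc_diff_le qpoch_qq_Suc)
  moreover have "1 - q ^ (Suc N - j) \<noteq> 0"
    using assms one_minus_power_Suc_nonzero by (simp add: Suc_diff_le)
  ultimately show ?thesis
    unfolding qpf_coeff_def by simp
qed

lemma qpf_coeff_Suc_Suc:
  assumes "i \<le> N"
  shows "(1 - q ^ Suc i) * qpf_coeff q (Suc N) (Suc i) = - (q ^ Suc i * qpf_coeff q N i)"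
  using qpf_coeff_Suc_right[of i "Suc N"] qpf_coeff_Suc_left[OF assms] assms
  by (simp add: Suc_diff_le)

text \<open>The two \<open>q\<close>-Pascal rules for the \<open>q\<close>-binomial coefficient \<open>[N, j]_q\<close>.\<close>

lemma qpf_coeff_pascal:
  assumes "j \<le> Suc N"
  shows "(1 - q ^ Suc N) * qpf_coeff q (Suc N) j
    = (if j \<le> N then qpf_coeff q N j else 0) - (if j = 0 then 0 else q ^ Suc N * qpf_coeff q N (j - 1))"
proof (cases j)
  case 0
  then show ?thesis
    using qpf_coeff_Suc_left[of 0 N] by simp
next
  case (Suc i)
  define x where "x = q ^ Suc i"
  have x: "1 - x \<noteq> 0"
    unfolding x_def by (rule one_minus_power_Suc_nonzero)
  have top: "(1 - x) * qpf_coeff q (Suc N) j = - (x * qpf_coeff q N i)"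
    using qpf_coeff_Suc_Suc[of i N] Suc assms by (simp add: x_def)
  then have c1: "qpf_coeff q (Suc N) j = - (x * qpf_coeff q N i) / (1 - x)"
    using x by (simp add: field_simps)
  show ?thesis
  proof (cases "i < N")
    case True
    define y where "y = q ^ (N - i)"
    have xy: "q ^ Suc N = x * y"
      using True by (simp add: x_def y_def flip: power_add)
    have "(1 - x) * qpf_coeff q N j = - (x * (1 - y) * qpf_coeff q N i)"
      using qpf_coeff_Suc_right[OF True] Suc by (simp add: x_def y_def)
    then have c0: "qpf_coeff q N j = - (x * (1 - y) * qpf_coeff q N i) / (1 - x)"
      using x by (simp add: field_simps)
    show ?thesis
      unfolding c0 c1 xy using x True Suc by (simp add: field_simps)
  next
    case False
    then show ?thesis
      using top Suc assms by (simp add: x_def)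
  qed
qed

lemma qpf_coeff_pascal':
  assumes "j \<le> Suc N"
  shows "(1 - q ^ Suc N) * qpf_coeff q (Suc N) j
    = q ^ j * ((if j \<le> N then qpf_coeff q N j else 0) - (if j = 0 then 0 else qpf_coeff q N (j - 1)))"
proof (cases j)
  case 0
  then show ?thesis
    using qpf_coeff_pascal[OF assms] by simp
next
  case (Suc i)
  show ?thesis
  proof (cases "i < N")
    case True
    define x y a c where "x = q ^ Suc i" and "y = q ^ (N - i)"
      and "a = qpf_coeff q N i" and "c = qpf_coeff q N j"
    have xy: "q ^ Suc N = x * y"
      using True by (simp add: x_def y_def flip: power_add)
    have "c - x * y * a - x * (c - a) = (1 - x) * c + x * (1 - y) * a"
      by (simp add: algebra_simps)
    also have "\<dots> = 0"
      using qpf_coeff_Suc_right[OF True] Suc by (simp add: x_def y_def a_def c_def)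
    finally have "c - x * y * a = x * (c - a)"
      by simp
    then show ?thesis
      using qpf_coeff_pascal[OF assms] Suc True unfolding xy by (simp add: x_def a_def c_def)
  next
    case False
    then show ?thesis
      using qpf_coeff_pascal[OF assms] Suc assms by simp
  qed
qed

lemma qpf_sum_Suc:
  "(1 - q ^ Suc N) * (\<Sum>j\<le>Suc N. qpf_term q (Suc N) d z j)
    = (\<Sum>j\<le>N. qpf_term q N d z j) - q ^ Suc N / q ^ d * (\<Sum>j\<le>N. qpf_term q N d (z * q) j)"
proof -
  have "(1 - q ^ Suc N) * (\<Sum>j\<le>Suc N. qpf_term q (Suc N) d z j)
      = (\<Sum>j\<le>Suc N. ((if j \<le> N then qpf_coeff q N j else 0)
          - (if j = 0 then 0 else q ^ Suc N * qpf_coeff q N (j - 1))) / (q ^ (j * d) * (1 - z * q ^ j)))"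
    unfolding sum_distrib_left qpf_term_def
    by (intro sum.cong refl) (simp add: qpf_coeff_pascal flip: qpf_coeff_pascal)
  also have "\<dots> = (\<Sum>j\<le>N. qpf_term q N d z j) - q ^ Suc N / q ^ d * (\<Sum>j\<le>N. qpf_term q N d (z * q) j)"
    unfolding sum_atMost_Suc_pascal[where b = "\<lambda>k. q ^ Suc N * qpf_coeff q N k"] sum_distrib_left qpf_term_def
    by (simp add: power_add mult_ac)
  finally show ?thesis .
qed

lemma qpf_sum_Suc_diagonal:
  assumes "q \<noteq> 0"
  shows "(1 - q ^ Suc N) * (\<Sum>j\<le>Suc N. qpf_term q (Suc N) (Suc N) z j)
    = (\<Sum>j\<le>N. qpf_term q N N z j) - (\<Sum>j\<le>N. qpf_term q N N (z * q) j) / q ^ N"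
proof -
  have "(1 - q ^ Suc N) * (\<Sum>j\<le>Suc N. qpf_term q (Suc N) (Suc N) z j)
      = (\<Sum>j\<le>Suc N. ((if j \<le> N then qpf_coeff q N j else 0)
          - (if j = 0 then 0 else qpf_coeff q N (j - 1))) / (q ^ (j * N) * (1 - z * q ^ j)))"
    unfolding sum_distrib_left qpf_term_def
  proof (intro sum.cong refl)
    fix j assume "j \<in> {..Suc N}"
    then have "(1 - q ^ Suc N) * qpf_coeff q (Suc N) j = q ^ j * ((if j \<le> N then qpf_coeff q N j else 0)
        - (if j = 0 then 0 else qpf_coeff q N (j - 1)))"
      by (intro qpf_coeff_pascal') simp
    moreover have "q ^ (j * Suc N) = q ^ j * q ^ (j * N)"
      by (simp add: power_add)
    ultimately show "(1 - q ^ Suc N) * (qpf_coeff q (Suc N) j / (q ^ (j * Suc N) * (1 - z * q ^ j)))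
        = ((if j \<le> N then qpf_coeff q N j else 0) - (if j = 0 then 0 else qpf_coeff q N (j - 1)))
          / (q ^ (j * N) * (1 - z * q ^ j))"
      using assms by (simp add: mult.assoc)
  qed
  also have "\<dots> = (\<Sum>j\<le>N. qpf_term q N N z j) - (\<Sum>j\<le>N. qpf_term q N N (z * q) j) / q ^ N"
    unfolding sum_atMost_Suc_pascal[where b = "qpf_coeff q N"] sum_divide_distrib qpf_term_def
    by (simp add: power_add mult_ac)
  finally show ?thesis .
qed

lemma qpf_expansion:
  assumes q: "q \<noteq> 0" and z: "\<And>j. j \<le> N \<Longrightarrow> z * q ^ j \<noteq> 1" and d: "d \<le> N"
  shows "(\<Sum>j\<le>N. qpf_term q N d z j) = z ^ d / qpoch z q (Suc N)"
  using z d
proof (induction N arbitrary: z d)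
  case 0
  then show ?case
    by (simp add: qpf_term_def qpf_coeff_def qpoch_def)
next
  case (Suc N)
  have z: "z * q ^ j \<noteq> 1" if "j \<le> N" for j
    using Suc.prems(1) that by simp
  have zq: "z * q * q ^ j \<noteq> 1" if "j \<le> N" for j
    using Suc.prems(1)[of "Suc j"] that by (simp add: mult.assoc)
  have nz: "1 - q ^ Suc N \<noteq> 0" "1 - z \<noteq> 0" "1 - z * q * q ^ N \<noteq> 0" "qpoch (z * q) q N \<noteq> 0"
    using one_minus_power_Suc_nonzero Suc.prems(1)[of 0] Suc.prems(1)[of "Suc N"] zq
    by (auto simp: mult.assoc qpoch_def)
  have poch: "qpoch z q (Suc N) = (1 - z) * qpoch (z * q) q N"
    "qpoch (z * q) q (Suc N) = qpoch (z * q) q N * (1 - z * q * q ^ N)"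
    "qpoch z q (Suc (Suc N)) = (1 - z) * (qpoch (z * q) q N * (1 - z * q * q ^ N))"
    by (simp_all only: qpoch_Suc_shift[of z] qpoch_Suc[of "z * q"])
  have "(1 - q ^ Suc N) * (\<Sum>j\<le>Suc N. qpf_term q (Suc N) d z j) = (1 - q ^ Suc N) * (z ^ d / qpoch z q (Suc (Suc N)))"
  proof (cases "d \<le> N")
    case True
    have "(1 - q ^ Suc N) * (\<Sum>j\<le>Suc N. qpf_term q (Suc N) d z j)
        = z ^ d / qpoch z q (Suc N) - q ^ Suc N / q ^ d * ((z * q) ^ d / qpoch (z * q) q (Suc N))"
      unfolding qpf_sum_Suc using Suc.IH[OF z True] Suc.IH[OF zq True] by simp
    also have "\<dots> = (1 - q ^ Suc N) * (z ^ d / qpoch z q (Suc (Suc N)))"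
      using nz q unfolding poch by (simp add: divide_simps power_mult_distrib) (simp add: algebra_simps)
    finally show ?thesis .
  next
    case False
    then have d: "d = Suc N"
      using Suc.prems(2) by simp
    have "(1 - q ^ Suc N) * (\<Sum>j\<le>Suc N. qpf_term q (Suc N) d z j)
        = z ^ N / qpoch z q (Suc N) - (z * q) ^ N / qpoch (z * q) q (Suc N) / q ^ N"
      unfolding d qpf_sum_Suc_diagonal[OF q] using Suc.IH[OF z order.refl] Suc.IH[OF zq order.refl] by simp
    also have "\<dots> = (1 - q ^ Suc N) * (z ^ d / qpoch z q (Suc (Suc N)))"
      using nz q unfolding poch d by (simp add: divide_simps power_mult_distrib) (simp add: algebra_simps)
    finally show ?thesis .
  qed
  then show ?case
    using mult_left_cancel[OF nz(1)] by blast
qed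

end

lemma sum_atMost_odd_pairs:
  fixes f :: "nat \<Rightarrow> 'a::comm_monoid_add"
  shows "(\<Sum>j\<le>2 * n + 1. f j) = (\<Sum>k\<le>n. f (n + 1 + k) + f (n - k))"
proof -
  let ?m = "Suc n"
  have "(\<Sum>j\<le>2 * n + 1. f j) = (\<Sum>j\<in>{0..<?m + ?m}. f j)"
    by (simp add: atLeast0LessThan lessThan_Suc_atMost[symmetric] mult_2)
  also have "\<dots> = (\<Sum>j\<in>{0..<?m}. f j) + (\<Sum>j\<in>{?m..<?m + ?m}. f j)"
    by (rule sum.atLeastLessThan_concat[symmetric]) auto
  also have "(\<Sum>j\<in>{?m..<?m + ?m}. f j) = (\<Sum>j\<in>{0..<?m}. f (j + ?m))"
    using sum.shift_bounds_nat_ivl[of f 0 ?m ?m] by simp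
  also have "(\<Sum>j\<in>{0..<?m}. f j) = (\<Sum>j\<in>{0..<?m}. f (?m - Suc j))"
    unfolding atLeast0LessThan by (rule sum.nat_diff_reindex[symmetric])
  finally show ?thesis
    by (simp add: sum.distrib atLeast0LessThan lessThan_Suc_atMost add.commute add.left_commute)
qed

lemma prod_atMost_odd_pairs:
  fixes f :: "nat \<Rightarrow> 'a::comm_monoid_mult"
  shows "(\<Prod>j\<le>2 * n + 1. f j) = (\<Prod>k\<le>n. f (n + 1 + k) * f (n - k))"
proof -
  let ?m = "Suc n"
  have "(\<Prod>j\<le>2 * n + 1. f j) = (\<Prod>j\<in>{0..<?m + ?m}. f j)"
    by (simp add: atLeast0LessThan lessThan_Suc_atMost[symmetric] mult_2)
  also have "\<dots> = (\<Prod>j\<in>{0..<?m}. f j) * (\<Prod>j\<in>{?m..<?m + ?m}. f j)"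
    by (rule prod.atLeastLessThan_concat[symmetric]) auto
  also have "(\<Prod>j\<in>{?m..<?m + ?m}. f j) = (\<Prod>j\<in>{0..<?m}. f (j + ?m))"
    using prod.shift_bounds_nat_ivl[of f 0 ?m ?m] by simp
  also have "(\<Prod>j\<in>{0..<?m}. f j) = (\<Prod>j\<in>{0..<?m}. f (?m - Suc j))"
    unfolding atLeast0LessThan by (rule prod.nat_diff_reindex[symmetric])
  finally show ?thesis
    by (simp add: prod.distrib atLeast0LessThan lessThan_Suc_atMost mult.commute add.commute add.left_commute)
qed

lemma one_sub_norm_le_norm_one_add_power:
  fixes q :: complex
  assumes "norm q < 1"
  shows "1 - norm q \<le> norm (1 + q ^ m)"
proof (cases m)
  case 0
  then have "norm (1 + q ^ m) = 2"
    by simp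
  then show ?thesis
    using norm_ge_zero[of q] by linarith
next
  case (Suc k)
  have "norm q ^ m \<le> norm q"
    using Suc assms by (simp add: power_le_one mult_left_le)
  moreover have "1 - norm (q ^ m) \<le> norm (1 + q ^ m)"
    using norm_diff_ineq[of 1 "q ^ m"] by simp
  ultimately show ?thesis
    by (simp add: norm_power)
qed

lemma one_add_power_nonzero:
  fixes q :: complex
  assumes "norm q < 1"
  shows "1 + q ^ m \<noteq> 0"
  using one_sub_norm_le_norm_one_add_power[OF assms, of m] assms by auto

definition pair_coeff :: "complex \<Rightarrow> nat \<Rightarrow> complex" where
  "pair_coeff q k = (-1) ^ k * q ^ tri k * (1 - q ^ (2 * k + 1)) / ((1 + q ^ k) * (1 + q ^ (k + 1)))"

lemma qpoch_at_neg_inverse_power: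
  fixes q :: complex
  assumes "q \<noteq> 0"
  shows "qpoch (- 1 / q ^ (n + 1)) q (Suc (2 * n + 1))
    = 2 * qpoch (-q) q n * qpoch (-q) q (Suc n) / q ^ tri (n + 1)"
proof -
  define z where "z = - 1 / q ^ (n + 1)"
  have "qpoch z q (Suc (2 * n + 1)) = (\<Prod>k\<le>n. (1 - z * q ^ (n + 1 + k)) * (1 - z * q ^ (n - k)))"
    unfolding qpoch_def lessThan_Suc_atMost by (rule prod_atMost_odd_pairs)
  also have "\<dots> = (\<Prod>k\<le>n. (1 + q ^ k) * ((1 + q ^ Suc k) / q ^ Suc k))"
  proof (rule prod.cong[OF refl])
    fix k assume "k \<in> {..n}"
    then have "q ^ (n + 1) = q ^ (n - k) * q ^ Suc k"
      by (simp flip: power_add)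
    then show "(1 - z * q ^ (n + 1 + k)) * (1 - z * q ^ (n - k)) = (1 + q ^ k) * ((1 + q ^ Suc k) / q ^ Suc k)"
      using assms by (simp add: z_def field_simps power_add)
  qed
  also have "\<dots> = (\<Prod>k\<le>n. 1 + q ^ k) * ((\<Prod>k<Suc n. 1 + q ^ Suc k) / (\<Prod>k<Suc n. q ^ Suc k))"
    by (simp add: prod.distrib prod_dividef lessThan_Suc_atMost)
  also have "(\<Prod>k\<le>n. 1 + q ^ k) = 2 * qpoch (-q) q n"
    unfolding qpoch_def lessThan_Suc_atMost[symmetric] prod.lessThan_Suc_shift by simp
  also have "(\<Prod>k<Suc n. 1 + q ^ Suc k) = qpoch (-q) q (Suc n)"
    unfolding qpoch_def by simp
  also have "(\<Prod>k<Suc n. q ^ Suc k) = q ^ tri (n + 1)"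
    using prod_power_Suc_eq_power_tri[of q "Suc n"] by simp
  finally show ?thesis
    unfolding z_def by simp
qed

lemma qpf_term_upper:
  fixes q :: complex
  assumes q: "q \<noteq> 0" and z: "z = - 1 / q ^ (n + 1)"
  shows "q ^ tri n * qpf_term q (2 * n + 1) (n + 1) z (n + 1 + k)
    = (-1) ^ (n + 1 + k) * q ^ tri k / (qpoch q q (n + 1 + k) * qpoch q q (n - k) * (1 + q ^ k))"
proof -
  define P Y where "P = qpoch q q (n + 1 + k) * qpoch q q (n - k)" and "Y = q ^ ((n + 1 + k) * (n + 1))"
  have Y: "Y \<noteq> 0"
    using q by (simp add: Y_def)
  have "q ^ tri (n + 1 + k) * q ^ tri n = q ^ tri k * Y"
    unfolding Y_def by (simp only: tri_add_Suc flip: power_add)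
  then have e1: "q ^ tri (n + 1 + k) = q ^ tri k * Y / q ^ tri n"
    using q by (simp add: eq_divide_eq)
  have e2: "1 - z * q ^ (n + 1 + k) = 1 + q ^ k"
    using q by (simp add: z power_add)
  have e3: "2 * n + 1 - (n + 1 + k) = n - k"
    by simp
  have "q ^ tri n * qpf_term q (2 * n + 1) (n + 1) z (n + 1 + k)
      = q ^ tri n * ((-1) ^ (n + 1 + k) * (q ^ tri k * Y / q ^ tri n) / P / (Y * (1 + q ^ k)))"
    unfolding qpf_term_def qpf_coeff_def e1 e2 e3 Y_def[symmetric] P_def by (simp only: mult.commute)
  also have "\<dots> = (-1) ^ (n + 1 + k) * q ^ tri k / (P * (1 + q ^ k))"
    using q Y by simp
  finally show ?thesis
    unfolding P_def .
qed

lemma qpf_term_lower: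
  fixes q :: complex
  assumes q: "q \<noteq> 0" and z: "z = - 1 / q ^ (n + 1)" and k: "k \<le> n"
  shows "q ^ tri n * qpf_term q (2 * n + 1) (n + 1) z (n - k)
    = (-1) ^ (n - k) * q ^ tri k * q ^ Suc k / (qpoch q q (n + 1 + k) * qpoch q q (n - k) * (1 + q ^ Suc k))"
proof -
  define P Y where "P = qpoch q q (n + 1 + k) * qpoch q q (n - k)" and "Y = q ^ ((n - k) * (n + 1))"
  have Y: "Y \<noteq> 0"
    using q by (simp add: Y_def)
  have "q ^ tri (n - k) * q ^ tri n = q ^ tri k * Y"
    unfolding Y_def by (simp only: tri_diff[OF k] flip: power_add)
  then have e1: "q ^ tri (n - k) = q ^ tri k * Y / q ^ tri n"
    using q by (simp add: eq_divide_eq)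
  have "q ^ (n + 1) = q ^ (n - k) * q ^ Suc k"
    using k by (simp flip: power_add)
  then have e2: "1 - z * q ^ (n - k) = (1 + q ^ Suc k) / q ^ Suc k"
    using q by (simp add: z field_simps)
  have e3: "2 * n + 1 - (n - k) = n + 1 + k"
    using k by simp
  have "q ^ tri n * qpf_term q (2 * n + 1) (n + 1) z (n - k)
      = q ^ tri n * ((-1) ^ (n - k) * (q ^ tri k * Y / q ^ tri n) / P / (Y * ((1 + q ^ Suc k) / q ^ Suc k)))"
    unfolding qpf_term_def qpf_coeff_def e1 e2 e3 Y_def[symmetric] P_def by (simp only: mult.commute)
  also have "\<dots> = (-1) ^ (n - k) * q ^ tri k * q ^ Suc k / (P * (1 + q ^ Suc k))"
    using q Y by simp
  finally show ?thesis
    unfolding P_def .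
qed

text \<open>The poles \<open>j = n + 1 + k\<close> and \<open>j = n - k\<close> of \<open>z^(n+1) / (z;q)_(2n+2)\<close> combine into one
  term of the target sum at \<open>z = -q^(-n-1)\<close>.\<close>
lemma qpf_term_pair:
  fixes q :: complex
  assumes q: "norm q < 1" "q \<noteq> 0" and k: "k \<le> n" and z: "z = - 1 / q ^ (n + 1)"
  shows "q ^ tri n * (qpf_term q (2 * n + 1) (n + 1) z (n + 1 + k) + qpf_term q (2 * n + 1) (n + 1) z (n - k))
    = (-1) ^ (n + 1) * (pair_coeff q k / (qpoch q q (n - k) * qpoch q q (n + k + 1)))"
proof -
  define P u where "P = qpoch q q (n + 1 + k) * qpoch q q (n - k)" and "u = q ^ k"
  have nz: "P \<noteq> 0" "1 + u \<noteq> 0" "1 + q * u \<noteq> 0"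
    using q one_add_power_nonzero[OF q(1), of k] one_add_power_nonzero[OF q(1), of "Suc k"]
    by (simp_all add: P_def u_def qpoch_nonzero)
  have "q ^ (2 * k + 1) = q * u ^ 2"
    by (simp add: u_def power_add power_mult mult.commute flip: power_mult_distrib)
  then have coeff: "pair_coeff q k = (-1) ^ k * q ^ tri k * (1 - q * u ^ 2) / ((1 + u) * (1 + q * u))"
    by (simp add: pair_coeff_def u_def)
  have P: "qpoch q q (n - k) * qpoch q q (n + k + 1) = P"
    by (simp add: P_def add_ac mult.commute)
  have "n + 1 + k = (n - k) + (2 * k + 1)"
    using k by simp
  then have "(-1 :: complex) ^ (n + 1 + k) = (-1) ^ (n - k) * (-1) ^ (2 * k + 1)"
    by (simp only: power_add)
  then have sign: "(-1 :: complex) ^ (n - k) = - ((-1) ^ (n + 1) * (-1) ^ k)"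
    by (simp add: power_add)
  show ?thesis
    unfolding distrib_left[of "q ^ tri n"] qpf_term_upper[OF q(2) z] qpf_term_lower[OF q(2) z k]
    unfolding coeff P P_def[symmetric] sign power_add power_Suc u_def[symmetric] power_one_right
    using nz by (simp add: divide_simps) (simp add: algebra_simps power2_eq_square)
qed

lemma neg_inverse_power_mult_power_neq_one:
  fixes q :: complex
  assumes q: "norm q < 1" "q \<noteq> 0"
  shows "- 1 / q ^ (n + 1) * q ^ j \<noteq> 1"
proof
  assume "- 1 / q ^ (n + 1) * q ^ j = 1"
  then have "q ^ j = - (q ^ (n + 1))"
    using q by (simp add: field_simps minus_equation_iff[of "q ^ j"])
  then have "norm q ^ j = norm q ^ (n + 1)"
    by (metis norm_minus_cancel norm_power)
  then have "j = n + 1"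
    using q power_inject_exp'[of "norm q" j "n + 1"] by auto
  then show False
    using \<open>q ^ j = - (q ^ (n + 1))\<close> q by (simp add: eq_neg_iff_add_eq_0)
qed

lemma sum_pair_coeff_div_qpoch:
  fixes q :: complex
  assumes q: "norm q < 1"
  shows "(\<Sum>k\<le>n. pair_coeff q k / (qpoch q q (n - k) * qpoch q q (n + k + 1)))
    = 1 / (2 * qpoch (-q) q n * qpoch (-q) q (Suc n))"
proof (cases "q = 0")
  case True
  have "pair_coeff 0 0 = 1 / 2" "pair_coeff 0 (Suc k) = 0" for k
    by (simp_all add: pair_coeff_def tri_Suc)
  then show ?thesis
    unfolding True by (subst sum.atMost_shift) (simp add: qpoch_def)
next
  case False
  define z where "z = - 1 / q ^ (n + 1)"
  have qpoch_nz: "qpoch q q m \<noteq> 0" "qpoch (-q) q m \<noteq> 0" for m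
    using q by (simp_all add: qpoch_nonzero)
  have z_pole: "z * q ^ j \<noteq> 1" for j
    unfolding z_def by (rule neg_inverse_power_mult_power_neq_one[OF q False])
  have "(-1) ^ (n + 1) * (\<Sum>k\<le>n. pair_coeff q k / (qpoch q q (n - k) * qpoch q q (n + k + 1)))
      = q ^ tri n * (\<Sum>k\<le>n. qpf_term q (2 * n + 1) (n + 1) z (n + 1 + k) + qpf_term q (2 * n + 1) (n + 1) z (n - k))"
    unfolding sum_distrib_left using qpf_term_pair[OF q False _ z_def] by simp
  also have "\<dots> = q ^ tri n * (z ^ (n + 1) / qpoch z q (Suc (2 * n + 1)))"
    unfolding sum_atMost_odd_pairs[symmetric]
    by (subst qpf_expansion) (use qpoch_nz False z_pole in auto)
  also have "\<dots> = (-1) ^ (n + 1) * (1 / (2 * qpoch (-q) q n * qpoch (-q) q (Suc n)))"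
  proof -
    have "z ^ (n + 1) = (-1) ^ (n + 1) / (q ^ tri (n + 1) * q ^ tri n)"
      by (simp only: z_def power_divide square_eq_tri_add_tri flip: power_mult power_add)
    then show ?thesis
      unfolding qpoch_at_neg_inverse_power[OF False, of n, folded z_def] using False qpoch_nz by simp
  qed
  finally show ?thesis
    by (rule mult_left_cancel[THEN iffD1, rotated]) simp
qed

lemma infsum_eq_suminf:
  fixes f :: "nat \<Rightarrow> 'a::banach"
  assumes "summable (\<lambda>n. norm (f n))"
  shows "infsum f UNIV = suminf f"
  using assms by (intro infsumI norm_summable_imp_has_sum summable_sums[OF summable_norm_cancel])

lemma suminf_norm_le_geometric:
  fixes f :: "nat \<Rightarrow> 'a::banach"
  assumes r: "0 \<le> r" "r < 1" and bound: "\<And>k. norm (f k) \<le> C * r ^ k"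
  shows "summable (\<lambda>k. norm (f k))" and "(\<Sum>k. norm (f k)) \<le> C / (1 - r)"
proof -
  have geom: "summable (\<lambda>k. C * r ^ k)"
    using r by (simp add: summable_mult)
  show sum: "summable (\<lambda>k. norm (f k))"
    using bound by (intro summable_comparison_test'[OF geom]) auto
  have "(\<Sum>k. norm (f k)) \<le> (\<Sum>k. C * r ^ k)"
    using bound by (intro suminf_le sum geom)
  also have "\<dots> = C / (1 - r)"
    using r by (simp add: suminf_mult suminf_geometric)
  finally show "(\<Sum>k. norm (f k)) \<le> C / (1 - r)" .
qed

lemma summable_norm_suminf_geometric_bound:
  fixes f :: "nat \<Rightarrow> nat \<Rightarrow> 'a::banach"
  assumes r: "0 \<le> r" "r < 1" and bound: "\<And>n k. norm (f n k) \<le> C * r ^ n * r ^ k"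
  shows "summable (\<lambda>n. norm (\<Sum>k. f n k))"
proof (rule suminf_norm_le_geometric(1)[OF r, where C = "C / (1 - r)"])
  fix n
  have "summable (\<lambda>k. norm (f n k))" "(\<Sum>k. norm (f n k)) \<le> C * r ^ n / (1 - r)"
    using suminf_norm_le_geometric[OF r, of "f n" "C * r ^ n"] bound by (simp_all add: mult.assoc)
  then show "norm (\<Sum>k. f n k) \<le> C / (1 - r) * r ^ n"
    using summable_norm[of "f n"] by simp
qed

lemma suminf_swap_geometric_bound:
  fixes f :: "nat \<Rightarrow> nat \<Rightarrow> 'a::banach"
  assumes r: "0 \<le> r" "r < 1" and bound: "\<And>n k. norm (f n k) \<le> C * r ^ n * r ^ k"
  shows "(\<Sum>n. \<Sum>k. f n k) = (\<Sum>k. \<Sum>n. f n k)"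
proof -
  have row: "summable (\<lambda>k. norm (f n k))" for n
    using suminf_norm_le_geometric(1)[OF r, of "f n" "C * r ^ n"] bound by (simp add: mult.assoc)
  have col: "summable (\<lambda>n. norm (f n k))" for k
    using suminf_norm_le_geometric(1)[OF r, of "\<lambda>n. f n k" "C * r ^ k"] bound by (simp add: mult_ac)
  have "summable (\<lambda>n. norm (\<Sum>k. norm (f n k)))"
    by (rule summable_norm_suminf_geometric_bound[OF r, where C = C]) (simp add: bound)
  then have "(\<lambda>(n, k). f n k) abs_summable_on UNIV \<times> UNIV"
    unfolding Infinite_Sum.abs_summable_on_Sigma_iff
    using row by (simp add: norm_summable_imp_summable_on infsum_eq_suminf)
  then have "(\<lambda>(n, k). f n k) summable_on UNIV \<times> UNIV"
    by (rule abs_summable_summable)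
  then have "infsum (\<lambda>n. infsum (\<lambda>k. f n k) UNIV) UNIV = infsum (\<lambda>k. infsum (\<lambda>n. f n k) UNIV) UNIV"
    by (rule infsum_swap_banach)
  moreover have "summable (\<lambda>n. norm (\<Sum>k. f n k))"
    by (rule summable_norm_suminf_geometric_bound[OF r bound])
  moreover have "summable (\<lambda>k. norm (\<Sum>n. f n k))"
    by (rule summable_norm_suminf_geometric_bound[OF r, where C = C]) (metis bound mult.assoc mult.commute)
  ultimately show ?thesis
    using row col by (simp add: infsum_eq_suminf)
qed

lemma convergent_prod_qpoch:
  fixes q :: complex
  assumes "norm q < 1"
  shows "convergent_prod (\<lambda>j. 1 - a * q ^ j)"
proof (rule abs_convergent_prod_imp_convergent_prod)
  have "summable (\<lambda>j. norm a * norm q ^ j)"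
    using assms by (simp add: summable_mult)
  then show "abs_convergent_prod (\<lambda>j. 1 - a * q ^ j)"
    by (simp add: abs_convergent_prod_conv_summable norm_mult norm_power)
qed

lemma qpoch_LIMSEQ:
  fixes q :: complex
  assumes "norm q < 1"
  shows "(\<lambda>n. qpoch a q n) \<longlonglongrightarrow> qpoch_inf a q"
proof -
  have "(\<lambda>n. qpoch a q (Suc n)) \<longlonglongrightarrow> qpoch_inf a q"
    unfolding qpoch_def qpoch_inf_def lessThan_Suc_atMost
    by (rule convergent_prod_LIMSEQ[OF convergent_prod_qpoch[OF assms]])
  then show ?thesis
    by (rule LIMSEQ_imp_Suc)
qed

lemma qpoch_inf_nonzero:
  fixes q :: complex
  assumes "norm q < 1" "norm a < 1"
  shows "qpoch_inf a q \<noteq> 0"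
proof -
  have "1 - a * q ^ j \<noteq> 0" for j
    using qpoch_nonzero[of q a "Suc j"] assms by (simp add: qpoch_def)
  then show ?thesis
    unfolding qpoch_inf_def by (rule prodinf_nonzero[OF convergent_prod_qpoch[OF assms(1)]])
qed

text \<open>Every factor of \<open>(a;q)_m\<close> has norm at least \<open>1 - |q|^(j+1)\<close>, and the partial products
  of these decrease to the positive \<open>(|q|;|q|)_\<infinity>\<close>.\<close>
lemma qpoch_norm_lower_bound:
  fixes q :: complex
  assumes q: "norm q < 1"
  obtains L where "L > 0" "\<And>a m. norm a \<le> norm q \<Longrightarrow> L \<le> norm (qpoch a q m)"
proof -
  define r where "r = norm q"
  define f where "f j = 1 - r ^ Suc j" for j
  define L where "L = prodinf f"
  have r: "0 \<le> r" "r < 1"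
    using q by (simp_all add: r_def)
  have f: "0 < f j" "f j \<le> 1" for j
    using r power_less_one_iff[of r "Suc j"] by (simp_all add: f_def)
  have "summable (\<lambda>j. r ^ Suc j)"
    using r by simp
  then have conv: "convergent_prod f"
    using r by (intro abs_convergent_prod_imp_convergent_prod) (simp add: abs_convergent_prod_conv_summable f_def)
  have lim: "(\<lambda>n. \<Prod>j<n. f j) \<longlonglongrightarrow> L"
    unfolding L_def by (rule LIMSEQ_imp_Suc) (simp add: lessThan_Suc_atMost convergent_prod_LIMSEQ[OF conv])
  have dec: "decseq (\<lambda>n. \<Prod>j<n. f j)"
    using f by (intro decseq_SucI) (simp add: mult_left_le prod_nonneg less_imp_le)
  have L_le: "L \<le> (\<Prod>j<m. f j)" for m
    by (rule decseq_ge[OF dec lim])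
  have "L \<noteq> 0"
    unfolding L_def using f by (intro prodinf_nonzero[OF conv]) (simp add: less_le)
  moreover have "0 \<le> L"
    using lim by (rule LIMSEQ_le_const) (use f in \<open>auto intro!: exI[of _ 0] prod_pos less_imp_le\<close>)
  ultimately have "L > 0"
    by simp
  moreover have "L \<le> norm (qpoch a q m)" if a: "norm a \<le> norm q" for a m
  proof -
    have "f j \<le> norm (1 - a * q ^ j)" for j
    proof -
      have "norm (a * q ^ j) \<le> r ^ Suc j"
        using a by (simp add: r_def norm_mult norm_power mult_right_mono)
      then show ?thesis
        using norm_triangle_ineq2[of 1 "a * q ^ j"] by (simp add: f_def)
    qed
    then have "(\<Prod>j<m. f j) \<le> norm (qpoch a q m)"
      unfolding qpoch_def prod_norm[symmetric] by (intro prod_mono) (simp add: less_imp_le f)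
    then show ?thesis
      using L_le[of m] by simp
  qed
  ultimately show ?thesis
    using that by blast
qed

text \<open>Summed over \<open>s\<close>, these terms count partitions by their \<open>s \<times> (s + b)\<close> Durfee rectangle, so
  \<open>durfee_sum q b = 1 / (q;q)_\<infinity>\<close> for every \<open>b\<close>; here this follows analytically from a
  recursion in \<open>b\<close> and the limit \<open>b \<rightarrow> \<infinity>\<close>.\<close>
definition durfee_term :: "complex \<Rightarrow> nat \<Rightarrow> nat \<Rightarrow> complex" where
  "durfee_term q b s = q ^ (s * s + s * b) / (qpoch q q s * qpoch q q (s + b))"

definition durfee_sum :: "complex \<Rightarrow> nat \<Rightarrow> complex" where
  "durfee_sum q b = (\<Sum>s. durfee_term q b s)"

context
  fixes q :: complex
  assumes q: "norm q < 1"
begin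

lemma qpoch_qq_nonzero: "qpoch q q m \<noteq> 0"
  using q by (simp add: qpoch_nonzero)

lemma durfee_term_0: "durfee_term q b 0 = (1 - q ^ Suc b) * durfee_term q (Suc b) 0"
  using qpoch_qq_nonzero[of "Suc b"] by (simp add: durfee_term_def qpoch_qq_Suc)

lemma durfee_term_Suc:
  "durfee_term q b (Suc s) - (1 - q ^ Suc b) * durfee_term q (Suc b) (Suc s)
    = q ^ Suc b * durfee_term q (Suc (Suc b)) s"
proof -
  define E X Z u v where "E = q ^ (s * s + s * b + 2 * s + 1 + b)" and "X = qpoch q q s"
    and "Z = qpoch q q (s + b + 1)" and "u = q ^ Suc s" and "v = q ^ Suc b"
  have uv: "u * v = q ^ (s + b + 2)"
    unfolding u_def v_def by (simp flip: power_add)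
  have "1 - u * v \<noteq> 0"
    unfolding uv using one_minus_power_Suc_nonzero[OF qpoch_qq_nonzero, of "s + b + 1"] by simp
  then have nz: "X \<noteq> 0" "Z \<noteq> 0" "1 - u \<noteq> 0" "1 - u * v \<noteq> 0"
    using qpoch_qq_nonzero one_minus_power_Suc_nonzero[OF qpoch_qq_nonzero, of s]
    by (simp_all add: X_def Z_def u_def)
  have t1: "durfee_term q b (Suc s) = E / (X * (1 - u) * Z)"
  proof -
    have "Suc s * Suc s + Suc s * b = s * s + s * b + 2 * s + 1 + b"
      by (simp add: algebra_simps)
    moreover have "Suc s + b = Suc (s + b)"
      by simp
    ultimately show ?thesis
      unfolding durfee_term_def E_def X_def Z_def u_def by (simp only: qpoch_qq_Suc) (simp add: qpoch_qq_Suc)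
  qed
  have t2: "durfee_term q (Suc b) (Suc s) = E * u / (X * (1 - u) * (Z * (1 - u * v)))"
  proof -
    have "Suc s * Suc s + Suc s * Suc b = (s * s + s * b + 2 * s + 1 + b) + Suc s"
      by (simp add: algebra_simps)
    then have "q ^ (Suc s * Suc s + Suc s * Suc b) = E * u"
      unfolding E_def u_def by (simp only: power_add)
    moreover have "qpoch q q (Suc s + Suc b) = Z * (1 - u * v)"
      unfolding Z_def uv by (simp add: qpoch_qq_Suc)
    ultimately show ?thesis
      unfolding durfee_term_def X_def u_def by (simp add: qpoch_qq_Suc mult.assoc)
  qed
  have t3: "q ^ Suc b * durfee_term q (Suc (Suc b)) s = E / (X * (Z * (1 - u * v)))"
  proof -
    have "Suc b + (s * s + s * Suc (Suc b)) = s * s + s * b + 2 * s + 1 + b"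
      by (simp add: algebra_simps)
    then have "q ^ Suc b * q ^ (s * s + s * Suc (Suc b)) = E"
      unfolding E_def by (simp only: power_add[symmetric])
    moreover have "qpoch q q (s + Suc (Suc b)) = Z * (1 - u * v)"
      unfolding Z_def uv by (simp add: qpoch_qq_Suc)
    ultimately show ?thesis
      unfolding durfee_term_def X_def by (simp add: mult.assoc[symmetric])
  qed
  show ?thesis
    unfolding t1 t2 t3 unfolding v_def[symmetric] using nz by (simp add: divide_simps) (simp add: algebra_simps)
qed

lemma durfee_term_bound:
  obtains C where "C > 0" "\<And>b s. norm (durfee_term q b s) \<le> C * norm q ^ (s * s + s * b)"
proof -
  obtain L where L: "L > 0" "\<And>m. L \<le> norm (qpoch q q m)"
    using qpoch_norm_lower_bound[OF q] order.refl by metis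
  have "norm (durfee_term q b s) \<le> 1 / (L * L) * norm q ^ (s * s + s * b)" for b s
  proof -
    have "L * L \<le> norm (qpoch q q s) * norm (qpoch q q (s + b))"
      using L by (intro mult_mono) auto
    then have "norm q ^ (s * s + s * b) / (norm (qpoch q q s) * norm (qpoch q q (s + b)))
        \<le> norm q ^ (s * s + s * b) / (L * L)"
      using L qpoch_qq_nonzero by (intro divide_left_mono mult_pos_pos) auto
    then show ?thesis
      by (simp add: durfee_term_def norm_divide norm_mult norm_power)
  qed
  moreover have "1 / (L * L) > 0"
    using L by simp
  ultimately show ?thesis
    using that by blast
qed

lemma summable_norm_durfee_term: "summable (\<lambda>s. norm (durfee_term q b s))"
proof -
  obtain C where C: "C > 0" "\<And>b s. norm (durfee_term q b s) \<le> C * norm q ^ (s * s + s * b)"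
    using durfee_term_bound by blast
  have "norm (durfee_term q b s) \<le> C * norm q ^ s" for s
  proof -
    have "s \<le> s * s + s * b"
      by (cases s) auto
    then have "norm q ^ (s * s + s * b) \<le> norm q ^ s"
      using q by (intro power_decreasing) auto
    then have "C * norm q ^ (s * s + s * b) \<le> C * norm q ^ s"
      using C(1) by (intro mult_left_mono) auto
    then show ?thesis
      using C(2)[of b s] by linarith
  qed
  then show ?thesis
    using q by (intro suminf_norm_le_geometric(1)[of "norm q"]) auto
qed

lemma summable_durfee_term: "summable (durfee_term q b)"
  by (rule summable_norm_cancel[OF summable_norm_durfee_term])

lemma durfee_sum_rec:
  "durfee_sum q b - (1 - q ^ Suc b) * durfee_sum q (Suc b) = q ^ Suc b * durfee_sum q (Suc (Suc b))"
proof -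
  define f where "f s = durfee_term q b s - (1 - q ^ Suc b) * durfee_term q (Suc b) s" for s
  have "summable f"
    unfolding f_def by (intro summable_diff summable_mult summable_durfee_term)
  then have "suminf f = (\<Sum>s. f (Suc s)) + f 0"
    by (simp add: suminf_split_head)
  moreover have "suminf f = durfee_sum q b - (1 - q ^ Suc b) * durfee_sum q (Suc b)"
    unfolding f_def durfee_sum_def
    using suminf_diff[OF summable_durfee_term summable_mult[OF summable_durfee_term]]
    by (simp add: suminf_mult summable_durfee_term)
  moreover have "(\<Sum>s. f (Suc s)) = q ^ Suc b * durfee_sum q (Suc (Suc b))"
    unfolding f_def durfee_term_Suc durfee_sum_def by (simp add: suminf_mult summable_durfee_term)
  ultimately show ?thesis
    by (simp add: f_def durfee_term_0[of b])
qed

lemma norm_durfee_sum_diff_le: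
  "norm (durfee_sum q b - durfee_sum q (Suc b)) \<le> norm (durfee_sum q (Suc b) - durfee_sum q (Suc (Suc b)))"
proof -
  have "durfee_sum q b - durfee_sum q (Suc b) = q ^ Suc b * (durfee_sum q (Suc (Suc b)) - durfee_sum q (Suc b))"
    using durfee_sum_rec[of b] by (simp add: algebra_simps)
  then have "norm (durfee_sum q b - durfee_sum q (Suc b))
      = norm q ^ Suc b * norm (durfee_sum q (Suc b) - durfee_sum q (Suc (Suc b)))"
    by (simp add: norm_mult norm_power norm_minus_commute)
  also have "\<dots> \<le> norm (durfee_sum q (Suc b) - durfee_sum q (Suc (Suc b)))"
  proof (rule mult_left_le_one_le)
    show "norm q ^ Suc b \<le> 1"
      using q by (intro power_le_one) auto
  qed simp_all
  finally show ?thesis .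
qed

lemma norm_durfee_sum_minus_inverse_qpoch_le:
  obtains C where "\<And>b. norm (durfee_sum q b - 1 / qpoch q q b) \<le> C * norm q ^ b"
proof -
  obtain C where C: "C > 0" "\<And>b s. norm (durfee_term q b s) \<le> C * norm q ^ (s * s + s * b)"
    using durfee_term_bound by blast
  have "norm (durfee_sum q b - 1 / qpoch q q b) \<le> C / (1 - norm q) * norm q ^ b" for b
  proof -
    have bound: "norm (durfee_term q b (Suc s)) \<le> C * norm q ^ b * norm q ^ s" for s
    proof -
      have "norm q ^ (Suc s * Suc s + Suc s * b) \<le> norm q ^ (b + s)"
        using q by (intro power_decreasing) (simp_all add: algebra_simps)
      then have "C * norm q ^ (Suc s * Suc s + Suc s * b) \<le> C * norm q ^ (b + s)"
        using C(1) by (intro mult_left_mono) auto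
      then show ?thesis
        using C(2)[of b "Suc s"] by (simp add: power_add mult.assoc)
    qed
    have r: "0 \<le> norm q" "norm q < 1"
      using q by simp_all
    have "durfee_term q b 0 = 1 / qpoch q q b"
      by (simp add: durfee_term_def)
    then have "durfee_sum q b - 1 / qpoch q q b = (\<Sum>s. durfee_term q b (Suc s))"
      using suminf_split_head[OF summable_durfee_term] unfolding durfee_sum_def by simp
    also have "norm \<dots> \<le> (\<Sum>s. norm (durfee_term q b (Suc s)))"
      by (rule summable_norm[OF suminf_norm_le_geometric(1)[OF r bound]])
    also have "\<dots> \<le> C * norm q ^ b / (1 - norm q)"
      by (rule suminf_norm_le_geometric(2)[OF r bound])
    finally show ?thesis
      by simp
  qed
  then show ?thesis
    by (rule that)
qed

lemma durfee_sum_LIMSEQ: "(\<lambda>b. durfee_sum q b) \<longlonglongrightarrow> 1 / qpoch_inf q q"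
proof -
  obtain C where C: "\<And>b. norm (durfee_sum q b - 1 / qpoch q q b) \<le> C * norm q ^ b"
    using norm_durfee_sum_minus_inverse_qpoch_le by blast
  have "(\<lambda>b. norm q ^ b) \<longlonglongrightarrow> 0"
    using q by (intro LIMSEQ_power_zero) simp
  from tendsto_mult[OF tendsto_const this, of C]
  have "(\<lambda>b. C * norm q ^ b) \<longlonglongrightarrow> 0"
    by simp
  then have "(\<lambda>b. durfee_sum q b - 1 / qpoch q q b) \<longlonglongrightarrow> 0"
    by (rule Lim_null_comparison[OF always_eventually, rotated]) (use C in blast)
  moreover have "(\<lambda>b. 1 / qpoch q q b) \<longlonglongrightarrow> 1 / qpoch_inf q q"
    using q by (intro tendsto_divide tendsto_const qpoch_LIMSEQ qpoch_inf_nonzero) auto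
  ultimately have "(\<lambda>b. 1 / qpoch q q b + (durfee_sum q b - 1 / qpoch q q b)) \<longlonglongrightarrow> 1 / qpoch_inf q q + 0"
    by (intro tendsto_add)
  then show ?thesis
    by simp
qed

text \<open>The recursion makes \<open>|durfee_sum q b - durfee_sum q (b + 1)|\<close> non-decreasing in \<open>b\<close>,
  while convergence forces it to \<open>0\<close>; so the sum does not depend on \<open>b\<close>.\<close>
lemma durfee_sum_eq: "durfee_sum q b = 1 / qpoch_inf q q"
proof -
  have step: "durfee_sum q b = durfee_sum q (Suc b)" for b
  proof -
    have "(\<lambda>k. norm (durfee_sum q (k + b) - durfee_sum q (k + Suc b)))
        \<longlonglongrightarrow> norm (1 / qpoch_inf q q - 1 / qpoch_inf q q)"
      by (intro tendsto_norm tendsto_diff LIMSEQ_ignore_initial_segment durfee_sum_LIMSEQ)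
    then have "(\<lambda>k. norm (durfee_sum q (b + k) - durfee_sum q (Suc (b + k)))) \<longlonglongrightarrow> 0"
      by (simp add: add.commute)
    moreover have "norm (durfee_sum q b - durfee_sum q (Suc b))
        \<le> norm (durfee_sum q (b + k) - durfee_sum q (Suc (b + k)))" for k
    proof (induction k)
      case (Suc k)
      then show ?case
        using norm_durfee_sum_diff_le[of "b + k"] by simp
    qed simp
    ultimately have "norm (durfee_sum q b - durfee_sum q (Suc b)) \<le> 0"
      by (intro LIMSEQ_le_const[of _ 0]) auto
    then show ?thesis
      by simp
  qed
  have const: "durfee_sum q b = durfee_sum q 0" for b
    by (induction b) (simp_all flip: step)
  then have "durfee_sum q = (\<lambda>b. durfee_sum q 0)"
    by (rule ext)
  then have "(\<lambda>b. durfee_sum q 0) \<longlonglongrightarrow> 1 / qpoch_inf q q"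
    using durfee_sum_LIMSEQ by simp
  then show ?thesis
    unfolding const[of b] by (rule LIMSEQ_unique[OF tendsto_const])
qed

end

definition double_term :: "complex \<Rightarrow> nat \<Rightarrow> nat \<Rightarrow> complex" where
  "double_term q n k = (if k \<le> n
     then pair_coeff q k * q ^ (n * (n + 1)) / (qpoch q q (n - k) * qpoch q q (n + k + 1)) else 0)"

lemma pair_coeff_mult_power:
  "pair_coeff q k * q ^ (k * (k + 1))
    = (-1) ^ k * q ^ (3 * k * (k + 1) div 2) * (1 - q ^ (2 * k + 1)) / ((1 + q ^ k) * (1 + q ^ (k + 1)))"
  unfolding pair_coeff_def three_tri by (simp add: power_add mult_ac)

context
  fixes q :: complex
  assumes q: "norm q < 1"
begin

lemma summand_eq_suminf_double_term:
  "q ^ (n\<^sup>2 + n) / ((qpoch (-q) q n)\<^sup>2 * (1 + q ^ (n + 1))) = 2 * (\<Sum>k. double_term q n k)"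
proof -
  have "(\<Sum>k. double_term q n k) = (\<Sum>k\<le>n. double_term q n k)"
    by (rule suminf_finite) (simp_all add: double_term_def)
  also have "\<dots> = q ^ (n * (n + 1)) * (\<Sum>k\<le>n. pair_coeff q k / (qpoch q q (n - k) * qpoch q q (n + k + 1)))"
    unfolding sum_distrib_left by (intro sum.cong) (simp_all add: double_term_def)
  also have "\<dots> = q ^ (n * (n + 1)) / (2 * (qpoch (-q) q n * qpoch (-q) q (Suc n)))"
    unfolding sum_pair_coeff_div_qpoch[OF q] by (simp add: mult.assoc)
  also have "qpoch (-q) q n * qpoch (-q) q (Suc n) = (qpoch (-q) q n)\<^sup>2 * (1 + q ^ (n + 1))"
    by (simp add: qpoch_Suc power2_eq_square)
  finally have "(\<Sum>k. double_term q n k) = q ^ (n * (n + 1)) / (2 * ((qpoch (-q) q n)\<^sup>2 * (1 + q ^ (n + 1))))" .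
  moreover have "n\<^sup>2 + n = n * (n + 1)"
    by (simp add: power2_eq_square)
  ultimately show ?thesis
    by (simp add: add.commute)
qed

lemma norm_pair_coeff_le: "norm (pair_coeff q k) \<le> 2 / (1 - norm q)\<^sup>2"
proof -
  have "norm (1 - q ^ (2 * k + 1)) \<le> 1 + norm (q ^ (2 * k + 1))"
    using norm_triangle_ineq4[of 1 "q ^ (2 * k + 1)"] by simp
  moreover have "norm (q ^ (2 * k + 1)) \<le> 1"
    unfolding norm_power using q by (intro power_le_one) auto
  ultimately have num: "norm (1 - q ^ (2 * k + 1)) \<le> 2"
    by simp
  have den: "(1 - norm q)\<^sup>2 \<le> norm (1 + q ^ k) * norm (1 + q ^ (k + 1))"
    unfolding power2_eq_square using q
    by (intro mult_mono one_sub_norm_le_norm_one_add_power) auto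
  have "norm (pair_coeff q k) = norm q ^ tri k * (norm (1 - q ^ (2 * k + 1)) / (norm (1 + q ^ k) * norm (1 + q ^ (k + 1))))"
    by (simp add: pair_coeff_def norm_mult norm_divide norm_power)
  also have "\<dots> \<le> 1 * (2 / (1 - norm q)\<^sup>2)"
    using q num den by (intro mult_mono frac_le) (simp_all add: power_le_one)
  finally show ?thesis
    by simp
qed

lemma norm_double_term_le:
  obtains K where "\<And>n k. norm (double_term q n k) \<le> K * norm q ^ n * norm q ^ k"
proof -
  obtain L where L: "L > 0" "\<And>m. L \<le> norm (qpoch q q m)"
    using qpoch_norm_lower_bound[OF q] order.refl by metis
  define K where "K = 2 / (1 - norm q)\<^sup>2 / (L * L)"
  have "norm (double_term q n k) \<le> K * norm q ^ n * norm q ^ k" for n k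
  proof (cases "k \<le> n")
    case True
    have "n + k \<le> n * (n + 1)"
      using True by (cases n) auto
    then have "norm q ^ (n * (n + 1)) \<le> norm q ^ n * norm q ^ k"
      using q by (simp add: power_decreasing flip: power_add)
    moreover have "L * L \<le> norm (qpoch q q (n - k)) * norm (qpoch q q (n + k + 1))"
      using L by (intro mult_mono) auto
    ultimately have "norm q ^ (n * (n + 1)) / (norm (qpoch q q (n - k)) * norm (qpoch q q (n + k + 1)))
        \<le> norm q ^ n * norm q ^ k / (L * L)"
      using L by (intro frac_le) auto
    then have "norm (pair_coeff q k) * (norm q ^ (n * (n + 1)) / (norm (qpoch q q (n - k)) * norm (qpoch q q (n + k + 1))))
        \<le> 2 / (1 - norm q)\<^sup>2 * (norm q ^ n * norm q ^ k / (L * L))"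
      by (intro mult_mono norm_pair_coeff_le) auto
    then show ?thesis
      using True by (simp add: double_term_def K_def norm_mult norm_divide norm_power)
  next
    case False
    then show ?thesis
      using L by (simp add: double_term_def K_def)
  qed
  then show ?thesis
    by (rule that)
qed

lemma summable_double_term: "summable (\<lambda>n. double_term q n k)"
proof -
  obtain K where K: "\<And>n k. norm (double_term q n k) \<le> K * norm q ^ n * norm q ^ k"
    using norm_double_term_le by blast
  have "summable (\<lambda>n. norm (double_term q n k))"
    using q K by (intro suminf_norm_le_geometric(1)[of "norm q" _ "K * norm q ^ k"]) (simp_all add: mult_ac)
  then show ?thesis
    by (rule summable_norm_cancel)
qed

lemma suminf_double_term: "(\<Sum>n. double_term q n k) = pair_coeff q k * q ^ (k * (k + 1)) / qpoch_inf q q"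
proof -
  have shift: "double_term q (n + k) k = pair_coeff q k * q ^ (k * (k + 1)) * durfee_term q (2 * k + 1) n" for n
  proof -
    have "(n + k) * (n + k + 1) = (n * n + n * (2 * k + 1)) + k * (k + 1)"
      by (simp add: algebra_simps)
    then have e1: "q ^ ((n + k) * (n + k + 1)) = q ^ (n * n + n * (2 * k + 1)) * q ^ (k * (k + 1))"
      by (simp only: power_add)
    have e2: "n + k + k + 1 = n + (2 * k + 1)" "n + k - k = n"
      by simp_all
    show ?thesis
      unfolding double_term_def durfee_term_def e1 e2 by (simp add: mult_ac)
  qed
  have "(\<Sum>n. double_term q n k) = (\<Sum>n. double_term q (n + k) k) + (\<Sum>i<k. double_term q i k)"
    by (rule suminf_split_initial_segment[OF summable_double_term])
  also have "(\<Sum>i<k. double_term q i k) = 0"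
    by (simp add: double_term_def)
  also have "(\<Sum>n. double_term q (n + k) k) = pair_coeff q k * q ^ (k * (k + 1)) * durfee_sum q (2 * k + 1)"
    unfolding shift durfee_sum_def by (rule suminf_mult[OF summable_durfee_term[OF q]])
  finally show ?thesis
    by (simp add: durfee_sum_eq[OF q])
qed

lemma suminf_summand_eq:
  "(\<Sum>n. q ^ (n\<^sup>2 + n) / ((qpoch (-q) q n)\<^sup>2 * (1 + q ^ (n + 1))))
    = 2 / qpoch_inf q q * (\<Sum>n. (-1) ^ n * q ^ (3 * n * (n + 1) div 2) * (1 - q ^ (2 * n + 1))
        / ((1 + q ^ n) * (1 + q ^ (n + 1))))"
proof -
  obtain K where K: "\<And>n k. norm (double_term q n k) \<le> K * norm q ^ n * norm q ^ k"
    using norm_double_term_le by blast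
  have "norm (pair_coeff q k * q ^ (k * (k + 1))) \<le> 2 / (1 - norm q)\<^sup>2 * norm q ^ k" for k
  proof -
    have "norm q ^ (k * (k + 1)) \<le> norm q ^ k"
      using q by (intro power_decreasing) auto
    then have "norm (pair_coeff q k) * norm q ^ (k * (k + 1)) \<le> 2 / (1 - norm q)\<^sup>2 * norm q ^ k"
      by (intro mult_mono norm_pair_coeff_le) auto
    then show ?thesis
      by (simp add: norm_mult norm_power)
  qed
  then have summable: "summable (\<lambda>k. pair_coeff q k * q ^ (k * (k + 1)))"
    using q by (intro summable_norm_cancel[OF suminf_norm_le_geometric(1)[of "norm q" _ "2 / (1 - norm q)\<^sup>2"]]) auto
  have "(\<Sum>n. q ^ (n\<^sup>2 + n) / ((qpoch (-q) q n)\<^sup>2 * (1 + q ^ (n + 1)))) = (\<Sum>n. 2 * (\<Sum>k. double_term q n k))"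
    unfolding summand_eq_suminf_double_term ..
  also have "\<dots> = 2 * (\<Sum>n. \<Sum>k. double_term q n k)"
    using summable_norm_suminf_geometric_bound[of "norm q" "double_term q"] q K
    by (intro suminf_mult summable_norm_cancel[of "\<lambda>n. \<Sum>k. double_term q n k"]) auto
  also have "(\<Sum>n. \<Sum>k. double_term q n k) = (\<Sum>k. \<Sum>n. double_term q n k)"
    using q K by (intro suminf_swap_geometric_bound[of "norm q"]) auto
  also have "\<dots> = (\<Sum>k. pair_coeff q k * q ^ (k * (k + 1))) / qpoch_inf q q"
    unfolding suminf_double_term by (rule suminf_divide[OF summable])
  finally show ?thesis
    unfolding pair_coeff_mult_power by simp
qed

end

lemma infsum_int_eq_suminf_pairs:
  fixes f :: "int \<Rightarrow> 'a::banach"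
  assumes nonneg: "summable (\<lambda>k. norm (f (int k)))" and neg: "summable (\<lambda>k. norm (f (- int k - 1)))"
  shows "infsum f UNIV = (\<Sum>k. f (int k) + f (- int k - 1))"
proof -
  define g where "g k = - int k - 1" for k
  have inj: "inj g"
    unfolding g_def inj_def by auto
  have "n \<in> range int \<union> range g" for n
  proof (cases "n \<ge> 0")
    case True
    then show ?thesis
      by (auto intro: image_eqI[of _ _ "nat n"])
  next
    case False
    then have "n = g (nat (- n - 1))"
      unfolding g_def by simp
    then show ?thesis
      by blast
  qed
  then have UNIV_eq: "UNIV = range int \<union> range g"
    by blast
  have disjoint: "range int \<inter> range g = {}"
    unfolding g_def by auto
  have nonneg': "f summable_on range int" "infsum f (range int) = (\<Sum>k. f (int k))"
    using norm_summable_imp_summable_on[OF nonneg] infsum_eq_suminf[OF nonneg]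
    by (simp_all add: summable_on_reindex infsum_reindex o_def)
  have fg: "f \<circ> g = (\<lambda>k. f (- int k - 1))"
    by (simp add: o_def g_def)
  have neg': "f summable_on range g" "infsum f (range g) = (\<Sum>k. f (g k))"
    using norm_summable_imp_summable_on[OF neg] infsum_eq_suminf[OF neg]
    unfolding summable_on_reindex[OF inj] infsum_reindex[OF inj] fg by (simp_all add: g_def)
  have "infsum f UNIV = (\<Sum>k. f (int k)) + (\<Sum>k. f (g k))"
    unfolding UNIV_eq infsum_Un_disjoint[OF nonneg'(1) neg'(1) disjoint] nonneg'(2) neg'(2) ..
  also have "\<dots> = (\<Sum>k. f (int k) + f (- int k - 1))"
    using summable_norm_cancel[OF nonneg] summable_norm_cancel[OF neg] by (simp add: suminf_add g_def)
  finally show ?thesis .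
qed

definition bilateral_term :: "complex \<Rightarrow> int \<Rightarrow> complex" where
  "bilateral_term q n = (-1) powi n * q ^ nat (3 * n * (n + 1) div 2) / (1 + q powi n)"

lemma bilateral_term_of_nat:
  "bilateral_term q (int k) = (-1) ^ k * q ^ (3 * k * (k + 1) div 2) / (1 + q ^ k)"
proof -
  have "3 * int k * (int k + 1) = int (3 * k * (k + 1))"
    by (simp add: algebra_simps)
  then have "3 * int k * (int k + 1) div 2 = int (3 * k * (k + 1) div 2)"
    by (simp only: zdiv_int of_nat_numeral)
  then show ?thesis
    by (simp add: bilateral_term_def)
qed

lemma bilateral_term_of_neg:
  assumes "q \<noteq> 0"
  shows "bilateral_term q (- int k - 1)
    = - ((-1) ^ k * q ^ (3 * k * (k + 1) div 2) * q ^ (k + 1) / (1 + q ^ (k + 1)))"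
proof -
  have "3 * (- int k - 1) * (- int k - 1 + 1) = int (3 * k * (k + 1))"
    by (simp add: algebra_simps)
  then have exponent: "3 * (- int k - 1) * (- int k - 1 + 1) div 2 = int (3 * k * (k + 1) div 2)"
    by (simp only: zdiv_int of_nat_numeral)
  have "- int k - 1 = - int (k + 1)"
    by simp
  then have powi: "x powi (- int k - 1) = inverse (x ^ (k + 1))" for x :: complex
    by (simp only: power_int_minus power_int_of_nat)
  have "1 + inverse (q ^ (k + 1)) = (q ^ (k + 1) + 1) / q ^ (k + 1)"
    using assms by (simp add: field_simps)
  moreover have "inverse ((-1 :: complex) ^ (k + 1)) = - ((-1) ^ k)"
    by (simp add: power_inverse[symmetric])
  ultimately show ?thesis
    unfolding bilateral_term_def exponent powi using assms by (simp add: divide_simps add.commute)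
qed

lemma bilateral_sum_eq:
  fixes q :: complex
  assumes q: "norm q < 1" "q \<noteq> 0"
  shows "infsum (bilateral_term q) UNIV
    = (\<Sum>n. (-1) ^ n * q ^ (3 * n * (n + 1) div 2) * (1 - q ^ (2 * n + 1)) / ((1 + q ^ n) * (1 + q ^ (n + 1))))"
proof -
  define e where "e k = 3 * k * (k + 1) div 2" for k :: nat
  have bound: "norm q ^ e k \<le> norm q ^ k" for k
    using q unfolding e_def by (intro power_decreasing three_tri_ge) auto
  have "summable (\<lambda>k. norm (bilateral_term q (int k)))"
  proof (rule suminf_norm_le_geometric(1)[of "norm q" _ "1 / (1 - norm q)"])
    show "norm (bilateral_term q (int k)) \<le> 1 / (1 - norm q) * norm q ^ k" for k
      using bound[of k] one_sub_norm_le_norm_one_add_power[OF q(1), of k] q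
      by (simp add: bilateral_term_of_nat e_def norm_mult norm_divide norm_power frac_le)
  qed (use q in auto)
  moreover have "summable (\<lambda>k. norm (bilateral_term q (- int k - 1)))"
  proof (rule suminf_norm_le_geometric(1)[of "norm q" _ "1 / (1 - norm q)"])
    fix k
    have "norm q ^ e k * norm q ^ (k + 1) \<le> 1 * norm q ^ k"
      using q by (intro mult_mono power_le_one power_decreasing) auto
    then show "norm (bilateral_term q (- int k - 1)) \<le> 1 / (1 - norm q) * norm q ^ k"
      using one_sub_norm_le_norm_one_add_power[OF q(1), of "k + 1"] q
      by (simp add: bilateral_term_of_neg e_def norm_mult norm_divide norm_power frac_le)
  qed (use q in auto)
  ultimately have "infsum (bilateral_term q) UNIV = (\<Sum>k. bilateral_term q (int k) + bilateral_term q (- int k - 1))"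
    by (rule infsum_int_eq_suminf_pairs)
  also have "(\<lambda>k. bilateral_term q (int k) + bilateral_term q (- int k - 1))
      = (\<lambda>n. (-1) ^ n * q ^ e n * (1 - q ^ (2 * n + 1)) / ((1 + q ^ n) * (1 + q ^ (n + 1))))"
  proof
    fix k
    show "bilateral_term q (int k) + bilateral_term q (- int k - 1)
        = (-1) ^ k * q ^ e k * (1 - q ^ (2 * k + 1)) / ((1 + q ^ k) * (1 + q ^ (k + 1)))"
      unfolding bilateral_term_of_nat bilateral_term_of_neg[OF q(2)] e_def[symmetric]
      using one_add_power_nonzero[OF q(1), of k] one_add_power_nonzero[OF q(1), of "k + 1"]
      by (simp add: divide_simps) (simp add: algebra_simps power_add mult_2_right)
  qed
  finally show ?thesis
    by (simp add: e_def)
qed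

theorem mainTheorem4:
  fixes q :: complex
  assumes "norm q < 1"
  shows "(\<Sum>n. q ^ (n\<^sup>2 + n) / ((qpoch (-q) q n)\<^sup>2 * (1 + q ^ (n + 1))))
           = 2 / qpoch_inf q q *
             (\<Sum>n. (-1) ^ n * q ^ (3 * n * (n + 1) div 2) * (1 - q ^ (2 * n + 1))
                    / ((1 + q ^ n) * (1 + q ^ (n + 1))))
       \<and> (q \<noteq> 0 \<longrightarrow> 2 / qpoch_inf q q *
             (\<Sum>n. (-1) ^ n * q ^ (3 * n * (n + 1) div 2) * (1 - q ^ (2 * n + 1))
                    / ((1 + q ^ n) * (1 + q ^ (n + 1))))
           = 2 / qpoch_inf q q *
             (\<Sum>\<^sub>\<infinity>n::int. (-1) powi n * q ^ nat (3 * n * (n + 1) div 2) / (1 + q powi n)))"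
proof (intro conjI impI)
  show "(\<Sum>n. q ^ (n\<^sup>2 + n) / ((qpoch (-q) q n)\<^sup>2 * (1 + q ^ (n + 1))))
      = 2 / qpoch_inf q q * (\<Sum>n. (-1) ^ n * q ^ (3 * n * (n + 1) div 2) * (1 - q ^ (2 * n + 1))
          / ((1 + q ^ n) * (1 + q ^ (n + 1))))"
    by (rule suminf_summand_eq[OF assms])
next
  assume "q \<noteq> 0"
  then show "2 / qpoch_inf q q * (\<Sum>n. (-1) ^ n * q ^ (3 * n * (n + 1) div 2) * (1 - q ^ (2 * n + 1))
          / ((1 + q ^ n) * (1 + q ^ (n + 1))))
      = 2 / qpoch_inf q q * (\<Sum>\<^sub>\<infinity>n::int. (-1) powi n * q ^ nat (3 * n * (n + 1) div 2) / (1 + q powi n))"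
    using bilateral_sum_eq[OF assms] by (simp add: bilateral_term_def[abs_def])
qed

end
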